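(* Let $p$ be a POP of length $k\geq 1$ and let $0\leq i\leq s\leq k$ be such that every label in $$I=\{1,2,\ldots,i\}\cup\{k-s+i+1,\,k-s+i+2,\ldots,k\}$$ is isolated in $p$ (incomparable to every other label). Let $p_1$ be the POP of length $k-s$ obtained from $p$ by deleting the labels in $I$ and relabeling the remaining labels $i+1,\ldots,k-s+i$ as $1,\ldots,k-s$ in an order-preserving way (i.e. label $j$ becomes $j-i$), keeping the order relations among them. Let $a(n)=|S_n(p)|$ and $b(n)=|S_n(p_1)|$. Then $a(n)=n!$ for $n<k$ and $$a(n)=\frac{n!}{(n-s)!}\,b(n-s)\quad\text{for } n\geq k.$$
   Context: An $n$-permutation is a word $\pi=\pi_1\cdots\pi_n$ containing each of $1,\ldots,n$ exactly once; $S_n$ is the set of $n$-permutations ($S_0$ consists of the empty permutation). A partially ordered pattern (POP) $p$ of length $k$ is a partial order $\prec$ on the label set $\{1,\ldots,k\}$ (for $k=0$ it is the empty pattern, contained in every permutation). An $n$-permutation $\pi$ contains $p$ if there are indices $1\leq i_1<\cdots<i_k\leq n$ such that $\pi_{i_j}<\pi_{i_m}$ whenever $j\prec m$ (no condition between incomparable labels); otherwise $\pi$ avoids $p$. $S_n(p)$ denotes the set of $n$-permutations avoiding $p$. *)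

theory Defs
  imports "HOL-Combinatorics.Multiset_Permutations"
begin

definition is_pop :: "nat \<Rightarrow> (nat \<times> nat) set \<Rightarrow> bool" where
  "is_pop k P \<longleftrightarrow> P \<subseteq> {1..k} \<times> {1..k} \<and> irrefl P \<and> trans P"

text \<open>n-permutations as lists (1-based values, list positions shifted by one).\<close>
definition perms :: "nat \<Rightarrow> nat list set" where
  "perms n = permutations_of_set {1..n}"

definition contains_pop :: "nat list \<Rightarrow> nat \<Rightarrow> (nat \<times> nat) set \<Rightarrow> bool" where
  "contains_pop w k P \<longleftrightarrow>
     (\<exists>f :: nat \<Rightarrow> nat. strict_mono_on {1..k} f \<and> f ` {1..k} \<subseteq> {1..length w} \<and>
        (\<forall>j m. (j, m) \<in> P \<longrightarrow> w ! (f j - 1) < w ! (f m - 1)))"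

definition avoiders :: "nat \<Rightarrow> nat \<Rightarrow> (nat \<times> nat) set \<Rightarrow> nat list set" where
  "avoiders n k P = {w \<in> perms n. \<not> contains_pop w k P}"

definition isolated :: "(nat \<times> nat) set \<Rightarrow> nat \<Rightarrow> bool" where
  "isolated P j \<longleftrightarrow> (\<forall>m. (j, m) \<notin> P \<and> (m, j) \<notin> P)"

end

theory Submission
  imports Defs "HOL-Library.Infinite_Set"
begin

text \<open>
  An isolated label imposes no order condition, so when it is the first (last) label of the
  pattern it can always be matched by the first (last) entry of the permutation. Hence
  \<open>x # v\<close> contains the pattern iff \<open>v\<close> contains the pattern with that label deleted. Since
  containment depends only on the relative order of the entries, \<open>v\<close> ranging over the
  permutations of \<open>{1..n} - {x}\<close> gives as many avoiders as over \<open>{1..n-1}\<close>. Deleting an isolated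
  end label thus multiplies the count by \<open>n\<close>, and deleting the \<open>s\<close> labels of \<open>I\<close> one at a
  time yields the factor \<open>n!/(n-s)!\<close>.
\<close>

definition avoiders_of_set :: "nat set \<Rightarrow> nat \<Rightarrow> (nat \<times> nat) set \<Rightarrow> nat list set" where
  "avoiders_of_set A k P = {w \<in> permutations_of_set A. \<not> contains_pop w k P}"

lemma avoiders_eq_avoiders_of_set: "avoiders n k P = avoiders_of_set {1..n} k P"
  unfolding avoiders_def avoiders_of_set_def perms_def ..

definition shift_pop :: "nat \<Rightarrow> (nat \<times> nat) set \<Rightarrow> (nat \<times> nat) set" where
  "shift_pop t P = (\<lambda>(j, m). (j - t, m - t)) ` P"

lemma shift_pop_0 [simp]: "shift_pop 0 P = P"
  unfolding shift_pop_def by (simp add: case_prod_beta)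

lemma shift_pop_shift_pop: "shift_pop a (shift_pop b P) = shift_pop (a + b) P"
  unfolding shift_pop_def by (auto simp: image_image case_prod_beta diff_diff_add add.commute)

lemma isolated_shift_pop:
  assumes "isolated P (j + t)" "1 \<le> j"
  shows "isolated (shift_pop t P) j"
  using assms unfolding isolated_def shift_pop_def
  by (force simp: le_diff_conv2)

lemma subset_if_isolated_first:
  assumes "P \<subseteq> {1..k} \<times> {1..k}" "isolated P 1"
  shows "P \<subseteq> {2..k} \<times> {2..k}"
proof (intro subrelI)
  fix j m assume "(j, m) \<in> P"
  moreover have "j \<noteq> 1" "m \<noteq> 1" using assms(2) calculation unfolding isolated_def by blast+
  ultimately show "(j, m) \<in> {2..k} \<times> {2..k}" using assms(1) by force
qed

lemma subset_if_isolated_last: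
  assumes "P \<subseteq> {1..k} \<times> {1..k}" "isolated P k"
  shows "P \<subseteq> {1..k - 1} \<times> {1..k - 1}"
proof (intro subrelI)
  fix j m assume "(j, m) \<in> P"
  moreover have "j \<noteq> k" "m \<noteq> k" using assms(2) calculation unfolding isolated_def by blast+
  ultimately show "(j, m) \<in> {1..k - 1} \<times> {1..k - 1}" using assms(1) by force
qed

lemma shift_pop_subset_if_isolated_first:
  assumes "P \<subseteq> {1..k} \<times> {1..k}" "isolated P 1"
  shows "shift_pop 1 P \<subseteq> {1..k - 1} \<times> {1..k - 1}"
  using subset_if_isolated_first[OF assms] unfolding shift_pop_def by force

lemma contains_pop_map_strict_mono:
  assumes "strict_mono_on (set w) h" "P \<subseteq> {1..k} \<times> {1..k}"
  shows "contains_pop (map h w) k P \<longleftrightarrow> contains_pop w k P"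
proof -
  have "map h w ! (f j - 1) < map h w ! (f m - 1) \<longleftrightarrow> w ! (f j - 1) < w ! (f m - 1)"
    if "f ` {1..k} \<subseteq> {1..length w}" "(j, m) \<in> P" for f j m
  proof -
    have "f j - 1 < length w" "f m - 1 < length w" using that assms(2) by force+
    then show ?thesis using strict_mono_on_less[OF assms(1)] by simp
  qed
  then show ?thesis unfolding contains_pop_def by (metis length_map)
qed

lemma card_avoiders_of_set_image:
  assumes "strict_mono_on A h" "P \<subseteq> {1..k} \<times> {1..k}"
  shows "card (avoiders_of_set (h ` A) k P) = card (avoiders_of_set A k P)"
proof -
  have inj: "inj_on h A" using assms(1) by (rule strict_mono_on_imp_inj_on)
  have "strict_mono_on (set w) h" if "w \<in> permutations_of_set A" for w
    using assms(1) permutations_of_setD(1)[OF that] by (simp add: strict_mono_on_def)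
  then have "avoiders_of_set (h ` A) k P = map h ` avoiders_of_set A k P"
    unfolding avoiders_of_set_def permutations_of_set_image_inj[OF inj]
    using contains_pop_map_strict_mono[OF _ assms(2)] by auto
  moreover have "inj_on (map h) (avoiders_of_set A k P)"
    unfolding avoiders_of_set_def
    by (rule inj_onI) (metis (no_types, lifting) inj inj_on_map_eq_map mem_Collect_eq
        permutations_of_setD(1) sup.idem)
  ultimately show ?thesis by (simp add: card_image)
qed

lemma card_avoiders_of_set:
  assumes "finite A" "P \<subseteq> {1..k} \<times> {1..k}"
  shows "card (avoiders_of_set A k P) = card (avoiders (card A) k P)"
proof -
  obtain h where "bij_betw h {..<card A} A" "strict_mono_on {..<card A} h"
    using ex_bij_betw_strict_mono_card[OF assms(1)] .
  then have "card (avoiders_of_set A k P) = card (avoiders_of_set {..<card A} k P)"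
    using card_avoiders_of_set_image[OF _ assms(2)] by (metis bij_betw_imp_surj_on)
  also have "\<dots> = card (avoiders_of_set (Suc ` {..<card A}) k P)"
    by (rule card_avoiders_of_set_image[OF _ assms(2), symmetric]) (simp add: strict_mono_on_def)
  finally show ?thesis by (simp add: avoiders_eq_avoiders_of_set image_Suc_lessThan)
qed

lemma card_permutations_of_set_filter_Cons:
  assumes "finite A" "A \<noteq> {}"
  shows "card {w \<in> permutations_of_set A. Q w} =
         (\<Sum>x\<in>A. card {v \<in> permutations_of_set (A - {x}). Q (x # v)})"
proof -
  have "{w \<in> permutations_of_set A. Q w} =
        (\<Union>x\<in>A. (\<lambda>v. x # v) ` {v \<in> permutations_of_set (A - {x}). Q (x # v)})"
    by (subst permutations_of_set_nonempty[OF assms(2)]) auto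
  also have "card \<dots> = (\<Sum>x\<in>A. card {v \<in> permutations_of_set (A - {x}). Q (x # v)})"
    by (subst card_UN_disjoint) (use assms in \<open>auto intro!: sum.cong card_image inj_onI\<close>)
  finally show ?thesis .
qed

lemma card_permutations_of_set_filter_snoc:
  assumes "finite A" "A \<noteq> {}"
  shows "card {w \<in> permutations_of_set A. Q w} =
         (\<Sum>x\<in>A. card {v \<in> permutations_of_set (A - {x}). Q (v @ [x])})"
proof -
  have rev_filter:
    "card {w \<in> permutations_of_set B. R w} = card {w \<in> permutations_of_set B. R (rev w)}"
    for B :: "'a set" and R
  proof -
    have "{w \<in> permutations_of_set B. R w} = rev ` {w \<in> permutations_of_set B. R (rev w)}"
      by (auto simp: image_iff permutations_of_set_def intro!: exI[of _ "rev _"])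
    then show ?thesis by (simp add: card_image)
  qed
  have "card {w \<in> permutations_of_set A. Q w} = card {w \<in> permutations_of_set A. Q (rev w)}"
    by (rule rev_filter)
  also have "\<dots> = (\<Sum>x\<in>A. card {v \<in> permutations_of_set (A - {x}). Q (rev (x # v))})"
    by (rule card_permutations_of_set_filter_Cons[OF assms])
  also have "\<dots> = (\<Sum>x\<in>A. card {v \<in> permutations_of_set (A - {x}). Q (v @ [x])})"
    by (intro sum.cong refl) (subst rev_filter, simp)
  finally show ?thesis .
qed

lemma contains_pop_Cons_D:
  assumes "P \<subseteq> {2..k} \<times> {2..k}" "contains_pop (x # w) k P"
  shows "contains_pop w (k - 1) (shift_pop 1 P)"
proof -
  obtain f where f: "strict_mono_on {1..k} f" "f ` {1..k} \<subseteq> {1..length (x # w)}"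
    and f_rel: "\<forall>j m. (j, m) \<in> P \<longrightarrow> (x # w) ! (f j - 1) < (x # w) ! (f m - 1)"
    using assms(2) unfolding contains_pop_def by blast
  have f_range: "2 \<le> f j \<and> f j \<le> Suc (length w)" if "2 \<le> j" "j \<le> k" for j
  proof -
    have "1 \<in> {1..k}" "j \<in> {1..k}" using that by auto
    then have "1 \<le> f 1" "f j \<le> Suc (length w)" using f(2) by (auto simp: image_subset_iff)
    moreover have "f 1 < f j" using strict_mono_onD[OF f(1)] that by simp
    ultimately show ?thesis by simp
  qed
  define g where "g j = f (Suc j) - 1" for j
  have "strict_mono_on {1..k - 1} g"
  proof (rule strict_mono_onI)
    fix r s assume rs: "r \<in> {1..k - 1}" "s \<in> {1..k - 1}" "r < s"
    then have "f (Suc r) < f (Suc s)" by (intro strict_mono_onD[OF f(1)]) auto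
    moreover have "2 \<le> f (Suc r)" using f_range rs by simp
    ultimately show "g r < g s" by (simp add: g_def)
  qed
  moreover have "g ` {1..k - 1} \<subseteq> {1..length w}"
  proof (rule image_subsetI)
    fix j assume "j \<in> {1..k - 1}"
    then have "2 \<le> f (Suc j) \<and> f (Suc j) \<le> Suc (length w)" by (intro f_range) auto
    then show "g j \<in> {1..length w}" by (auto simp: g_def)
  qed
  moreover have "w ! (g j - 1) < w ! (g m - 1)" if shifted: "(j, m) \<in> shift_pop 1 P" for j m
  proof -
    obtain j0 m0 where jm: "(j0, m0) \<in> P" "j = j0 - 1" "m = m0 - 1"
      using shifted unfolding shift_pop_def by auto
    have "2 \<le> j0" "j0 \<le> k" "2 \<le> m0" "m0 \<le> k" using assms(1) jm(1) by auto
    then have "g j = f j0 - 1" "g m = f m0 - 1" "2 \<le> f j0" "2 \<le> f m0"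
      using f_range jm by (simp_all add: g_def)
    with f_rel[rule_format, OF jm(1)] show ?thesis by (simp add: nth_Cons')
  qed
  ultimately show ?thesis unfolding contains_pop_def by blast
qed

lemma contains_pop_Cons_I:
  assumes "P \<subseteq> {2..k} \<times> {2..k}" "contains_pop w (k - 1) (shift_pop 1 P)"
  shows "contains_pop (x # w) k P"
proof -
  obtain g where g: "strict_mono_on {1..k - 1} g" "g ` {1..k - 1} \<subseteq> {1..length w}"
    and g_rel: "\<forall>j m. (j, m) \<in> shift_pop 1 P \<longrightarrow> w ! (g j - 1) < w ! (g m - 1)"
    using assms(2) unfolding contains_pop_def by blast
  define f where "f j = (if j = 1 then 1 else Suc (g (j - 1)))" for j
  have g_range: "1 \<le> g j \<and> g j \<le> length w" if "1 \<le> j" "j \<le> k - 1" for j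
    using g(2) that by (auto simp: image_subset_iff)
  have "strict_mono_on {1..k} f"
  proof (rule strict_mono_onI)
    fix r s assume rs: "r \<in> {1..k}" "s \<in> {1..k}" "r < s"
    show "f r < f s"
    proof (cases "r = 1")
      case True
      have "1 \<le> g (s - 1)" using rs True by (intro g_range[THEN conjunct1]) auto
      then show ?thesis using True rs(3) by (simp add: f_def)
    next
      case False
      then have "g (r - 1) < g (s - 1)" using rs by (intro strict_mono_onD[OF g(1)]) auto
      then show ?thesis using False rs by (simp add: f_def)
    qed
  qed
  moreover have "f ` {1..k} \<subseteq> {1..length (x # w)}"
    using g_range by (auto simp: f_def)
  moreover have "(x # w) ! (f j - 1) < (x # w) ! (f m - 1)" if jm: "(j, m) \<in> P" for j m
  proof -
    have "(j - 1, m - 1) \<in> shift_pop 1 P" using jm unfolding shift_pop_def by force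
    moreover have "2 \<le> j" "j \<le> k" "2 \<le> m" "m \<le> k" using assms(1) jm by auto
    moreover from calculation have "1 \<le> g (j - 1)" "1 \<le> g (m - 1)"
      by (intro g_range[THEN conjunct1]; simp)+
    ultimately show ?thesis using g_rel by (simp add: f_def nth_Cons')
  qed
  ultimately show ?thesis unfolding contains_pop_def by blast
qed

lemma contains_pop_Cons_iff:
  assumes "P \<subseteq> {2..k} \<times> {2..k}"
  shows "contains_pop (x # w) k P \<longleftrightarrow> contains_pop w (k - 1) (shift_pop 1 P)"
  using contains_pop_Cons_D[OF assms] contains_pop_Cons_I[OF assms] by blast

lemma contains_pop_snoc_D:
  assumes "P \<subseteq> {1..k - 1} \<times> {1..k - 1}" "contains_pop (w @ [x]) k P"
  shows "contains_pop w (k - 1) P"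
proof -
  obtain f where f: "strict_mono_on {1..k} f" "f ` {1..k} \<subseteq> {1..length (w @ [x])}"
    and f_rel: "\<forall>j m. (j, m) \<in> P \<longrightarrow> (w @ [x]) ! (f j - 1) < (w @ [x]) ! (f m - 1)"
    using assms(2) unfolding contains_pop_def by blast
  have f_range: "1 \<le> f j \<and> f j \<le> length w" if "1 \<le> j" "j \<le> k - 1" for j
  proof -
    have "j \<in> {1..k}" "k \<in> {1..k}" using that by auto
    then have "f j \<in> {1..Suc (length w)}" "f k \<le> Suc (length w)"
      using f(2) by (auto simp: image_subset_iff)
    moreover have "f j < f k" using strict_mono_onD[OF f(1)] that by force
    ultimately show ?thesis by simp
  qed
  have "strict_mono_on {1..k - 1} f"
    by (rule strict_mono_onI, rule strict_mono_onD[OF f(1)]) auto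
  moreover have "f ` {1..k - 1} \<subseteq> {1..length w}"
    using f_range by auto
  moreover have "w ! (f j - 1) < w ! (f m - 1)" if jm: "(j, m) \<in> P" for j m
  proof -
    have "1 \<le> f j \<and> f j \<le> length w" "1 \<le> f m \<and> f m \<le> length w"
      using assms(1) jm by (intro f_range; force)+
    then have "f j - 1 < length w" "f m - 1 < length w" by auto
    with f_rel[rule_format, OF jm] show ?thesis by (simp add: nth_append)
  qed
  ultimately show ?thesis unfolding contains_pop_def by blast
qed

lemma contains_pop_snoc_I:
  assumes "P \<subseteq> {1..k - 1} \<times> {1..k - 1}" "contains_pop w (k - 1) P"
  shows "contains_pop (w @ [x]) k P"
proof -
  obtain g where g: "strict_mono_on {1..k - 1} g" "g ` {1..k - 1} \<subseteq> {1..length w}"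
    and g_rel: "\<forall>j m. (j, m) \<in> P \<longrightarrow> w ! (g j - 1) < w ! (g m - 1)"
    using assms(2) unfolding contains_pop_def by blast
  define f where "f = g(k := Suc (length w))"
  have g_range: "1 \<le> g j \<and> g j \<le> length w" if "1 \<le> j" "j \<le> k - 1" for j
    using g(2) that by (auto simp: image_subset_iff)
  have "strict_mono_on {1..k} f"
  proof (rule strict_mono_onI)
    fix r s assume rs: "r \<in> {1..k}" "s \<in> {1..k}" "r < s"
    then have r: "1 \<le> r" "r \<le> k - 1" by auto
    show "f r < f s"
    proof (cases "s = k")
      case True
      then show ?thesis using g_range[OF r] rs(3) by (simp add: f_def)
    next
      case False
      then have "g r < g s" using rs by (intro strict_mono_onD[OF g(1)]) auto
      then show ?thesis using False rs by (simp add: f_def)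
    qed
  qed
  moreover have "f ` {1..k} \<subseteq> {1..length (w @ [x])}"
  proof (rule image_subsetI)
    fix j assume j: "j \<in> {1..k}"
    show "f j \<in> {1..length (w @ [x])}"
    proof (cases "j = k")
      case False
      then have "1 \<le> g j \<and> g j \<le> length w" using j by (intro g_range) auto
      then show ?thesis using False by (simp add: f_def)
    qed (simp add: f_def)
  qed
  moreover have "(w @ [x]) ! (f j - 1) < (w @ [x]) ! (f m - 1)" if jm: "(j, m) \<in> P" for j m
  proof -
    have "1 \<le> j" "j \<le> k - 1" "1 \<le> m" "m \<le> k - 1" using assms(1) jm by auto
    then have "g j - 1 < length w" "g m - 1 < length w" "j \<noteq> k" "m \<noteq> k"
      using g_range by force+
    then show ?thesis using g_rel[rule_format, OF jm] by (simp add: f_def nth_append)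
  qed
  ultimately show ?thesis unfolding contains_pop_def by blast
qed

lemma contains_pop_snoc_iff:
  assumes "P \<subseteq> {1..k - 1} \<times> {1..k - 1}"
  shows "contains_pop (w @ [x]) k P \<longleftrightarrow> contains_pop w (k - 1) P"
  using contains_pop_snoc_D[OF assms] contains_pop_snoc_I[OF assms] by blast

lemma card_avoiders_isolated_first:
  assumes "P \<subseteq> {1..k} \<times> {1..k}" "isolated P 1" "1 \<le> n"
  shows "card (avoiders n k P) = n * card (avoiders (n - 1) (k - 1) (shift_pop 1 P))"
proof -
  note shifted_subset = shift_pop_subset_if_isolated_first[OF assms(1,2)]
  have "card (avoiders n k P)
      = (\<Sum>x\<in>{1..n}.
          card {v \<in> permutations_of_set ({1..n} - {x}). \<not> contains_pop (x # v) k P})"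
    unfolding avoiders_eq_avoiders_of_set avoiders_of_set_def
    using assms(3) by (intro card_permutations_of_set_filter_Cons) auto
  also have "\<dots> = (\<Sum>x\<in>{1..n}. card (avoiders_of_set ({1..n} - {x}) (k - 1) (shift_pop 1 P)))"
    using contains_pop_Cons_iff[OF subset_if_isolated_first[OF assms(1,2)]]
    by (simp add: avoiders_of_set_def)
  also have "\<dots> = (\<Sum>x\<in>{1..n}. card (avoiders (n - 1) (k - 1) (shift_pop 1 P)))"
    using card_avoiders_of_set[OF _ shifted_subset] by simp
  finally show ?thesis by simp
qed

lemma card_avoiders_isolated_last:
  assumes "P \<subseteq> {1..k} \<times> {1..k}" "isolated P k" "1 \<le> n"
  shows "card (avoiders n k P) = n * card (avoiders (n - 1) (k - 1) P)"
proof -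
  note subset = subset_if_isolated_last[OF assms(1,2)]
  have "card (avoiders n k P)
      = (\<Sum>x\<in>{1..n}.
          card {v \<in> permutations_of_set ({1..n} - {x}). \<not> contains_pop (v @ [x]) k P})"
    unfolding avoiders_eq_avoiders_of_set avoiders_of_set_def
    using assms(3) by (intro card_permutations_of_set_filter_snoc) auto
  also have "\<dots> = (\<Sum>x\<in>{1..n}. card (avoiders_of_set ({1..n} - {x}) (k - 1) P))"
    unfolding avoiders_of_set_def contains_pop_snoc_iff[OF subset] ..
  also have "\<dots> = (\<Sum>x\<in>{1..n}. card (avoiders (n - 1) (k - 1) P))"
    using card_avoiders_of_set[OF _ subset] by simp
  finally show ?thesis by simp
qed

lemma card_avoiders_isolated_prefix:
  assumes "P \<subseteq> {1..k} \<times> {1..k}" "\<forall>j\<in>{1..t}. isolated P j" "t \<le> n"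
  shows "real (card (avoiders n k P))
       = fact n / fact (n - t) * card (avoiders (n - t) (k - t) (shift_pop t P))"
  using assms
proof (induction t arbitrary: n k P)
  case 0
  then show ?case by simp
next
  case (Suc t)
  let ?Q = "shift_pop 1 P"
  have first: "card (avoiders n k P) = n * card (avoiders (n - 1) (k - 1) ?Q)"
    using Suc.prems by (intro card_avoiders_isolated_first) auto
  have "\<forall>j\<in>{1..t}. isolated ?Q j"
    using Suc.prems(2) by (auto intro: isolated_shift_pop)
  then have "real (card (avoiders (n - 1) (k - 1) ?Q))
      = fact (n - 1) / fact (n - Suc t)
        * card (avoiders (n - Suc t) (k - Suc t) (shift_pop (Suc t) P))"
    using Suc.IH[OF shift_pop_subset_if_isolated_first] Suc.prems
    by (simp add: shift_pop_shift_pop)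
  then show ?case
    using Suc.prems(3) by (simp add: first fact_reduce[of n])
qed

lemma card_avoiders_isolated_suffix:
  assumes "P \<subseteq> {1..k} \<times> {1..k}" "\<forall>j\<in>{k - r + 1..k}. isolated P j" "r \<le> k" "r \<le> n"
  shows "real (card (avoiders n k P)) = fact n / fact (n - r) * card (avoiders (n - r) (k - r) P)"
  using assms
proof (induction r arbitrary: n k)
  case 0
  then show ?case by simp
next
  case (Suc r)
  have last: "card (avoiders n k P) = n * card (avoiders (n - 1) (k - 1) P)"
    using Suc.prems by (intro card_avoiders_isolated_last) auto
  have "\<forall>j\<in>{k - 1 - r + 1..k - 1}. isolated P j"
    using Suc.prems(2,3) by auto
  then have "real (card (avoiders (n - 1) (k - 1) P))
      = fact (n - 1) / fact (n - Suc r) * card (avoiders (n - Suc r) (k - Suc r) P)"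
    using Suc.IH[OF subset_if_isolated_last] Suc.prems by simp
  then show ?case
    using Suc.prems(4) by (simp add: last fact_reduce[of n])
qed

lemma avoiders_eq_perms_if_less:
  assumes "n < k"
  shows "avoiders n k P = perms n"
proof -
  have "\<not> contains_pop w k P" if "w \<in> perms n" for w
  proof
    assume "contains_pop w k P"
    then obtain f where "strict_mono_on {1..k} f" "f ` {1..k} \<subseteq> {1..length w}"
      unfolding contains_pop_def by blast
    then have "card {1..k} \<le> card {1..length w}"
      by (intro card_inj_on_le strict_mono_on_imp_inj_on) auto
    moreover have "length w = n"
      using that length_finite_permutations_of_set unfolding perms_def by fastforce
    ultimately show False using assms by simp
  qed
  then show ?thesis unfolding avoiders_def by auto
qed

theorem theorem2p4:
  fixes k i s :: nat and P :: "(nat \<times> nat) set"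
  assumes "k \<ge> 1" and "is_pop k P"
    and "i \<le> s" and "s \<le> k"
    and "\<forall>j \<in> {1..i} \<union> {k - s + i + 1..k}. isolated P j"
  defines "P1 \<equiv> {(j - i, m - i) | j m. (j, m) \<in> P \<and> i < j \<and> j \<le> k - s + i
                                       \<and> i < m \<and> m \<le> k - s + i}"
  shows "(\<forall>n < k. card (avoiders n k P) = fact n)
       \<and> (\<forall>n \<ge> k. real (card (avoiders n k P))
               = fact n / fact (n - s) * real (card (avoiders (n - s) (k - s) P1)))"
proof (intro conjI allI impI)
  fix n :: nat
  assume "n < k"
  then show "card (avoiders n k P) = fact n"
    by (simp add: avoiders_eq_perms_if_less perms_def)
next
  fix n :: nat
  assume "k \<le> n"
  have P_sub: "P \<subseteq> {1..k} \<times> {1..k}" using assms(2) unfolding is_pop_def by blast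
  have P_middle: "P \<subseteq> {i + 1..k - s + i} \<times> {i + 1..k - s + i}"
    using P_sub assms(5) unfolding isolated_def by fastforce
  have "P1 = shift_pop i P"
    using P_middle unfolding P1_def shift_pop_def by force
  have "real (card (avoiders n k P))
      = fact n / fact (n - (s - i)) * card (avoiders (n - (s - i)) (k - s + i) P)"
    using card_avoiders_isolated_suffix[OF P_sub, of "s - i" n] assms(3,4,5) \<open>k \<le> n\<close> by simp
  also have "real (card (avoiders (n - (s - i)) (k - s + i) P))
      = fact (n - (s - i)) / fact (n - s) * card (avoiders (n - s) (k - s) P1)"
    using card_avoiders_isolated_prefix[of P "k - s + i" i "n - (s - i)"] P_middle assms(3-5)
      \<open>k \<le> n\<close> \<open>P1 = shift_pop i P\<close> by fastforce
  finally show "real (card (avoiders n k P))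
      = fact n / fact (n - s) * real (card (avoiders (n - s) (k - s) P1))"
    by simp
qed

end
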